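(* Let $\phi\in\mathcal S$, $\theta>0$ and $n,k\ge1$. Let $X_{1,\theta},\dots,X_{n,\theta}$ be iid nonnegative infinitely divisible random variables with mean $1$ and Laplace transform $$\mathbf E(e^{-xX_{1,\theta}})=e^{\theta\phi(-x/(\theta\phi_1))}=e^{-\theta\psi(x/(\theta\phi_1))},\quad x\ge0,$$ where $\psi(x)=-\phi(-x)$. Put $\overline X_{n,\theta}=\sum_{m=1}^nX_{m,\theta}$ and $S_{m,\theta}=X_{m,\theta}/\overline X_{n,\theta}$. Then for all $(k_1,\dots,k_n)\in\mathbb N_0^n$ with $k_1+\dots+k_n=k$, $$\mathbf P(\mathbf K_{n,k}=(k_1,\dots,k_n))=\binom{k}{k_1\dots k_n}\frac{\prod_{m=1}^n\mathbf E(X_{m,\theta}^{k_m})}{\mathbf E(\overline X_{n,\theta}^k)}=\binom{k}{k_1\dots k_n}\frac{\mathbf E\left(\overline X_{n,\theta}^k\prod_{m=1}^nS_{m,\theta}^{k_m}\right)}{\mathbf E(\overline X_{n,\theta}^k)}.$$ That is, the occupancy law of $\mathbf K_{n,k}$ is the multinomial sampling law from the random partition of unity $(S_{1,\theta},\dots,S_{n,\theta})$, biased by $\overline X_{n,\theta}^k$.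
   Context: Let $(\phi_m)_{m\ge1}$ be nonnegative reals with $\phi_1>0$, and let $\phi(x)=\sum_{m\ge1}\phi_mx^m/m!$ have radius of convergence $x_0\in(0,\infty]$. We write $\phi\in\mathcal S$ if $\phi$ is finite on $(-\infty,x_0)$ and $\phi'$ is absolutely monotone there (all derivatives of $\phi'$ nonnegative on $(-\infty,x_0)$). For $\theta>0$ define the polynomials $\sigma_k(\theta)$ by $e^{\theta\phi(x)}=1+\sum_{k\ge1}\sigma_k(\theta)x^k/k!$, with $\sigma_0\equiv1$. $\mathbf K_{n,k}$ is a random vector in $\mathbb N_0^n$ with $$\mathbf P(\mathbf K_{n,k}=(k_1,\dots,k_n))=\frac{k!}{\sigma_k(n\theta)}\prod_{m=1}^n\frac{\sigma_{k_m}(\theta)}{k_m!}\quad\text{for } \sum k_m=k.$$ This is the law of $n$ iid variables $\xi_i$ with pgf $\exp(\theta(\phi(xu)-\phi(x)))$, $x\in(0,x_0)$, conditioned on their sum being $k$. *)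

theory Defs
  imports "HOL-Probability.Probability" "HOL-Computational_Algebra.Formal_Power_Series"
begin

text \<open>Coefficients c m (m >= 1) of phi(x) = sum_{m>=1} c m x^m / m!.  c 0 is ignored.\<close>

definition phi_series :: "(nat \<Rightarrow> real) \<Rightarrow> real \<Rightarrow> real" where
  "phi_series c x = (\<Sum>m. c (Suc m) / fact (Suc m) * x ^ Suc m)"

definition phi_radius :: "(nat \<Rightarrow> real) \<Rightarrow> ereal" where
  "phi_radius c = conv_radius (\<lambda>m. if m = 0 then 0 else c m / fact m)"

definition absolutely_monotone_on :: "(real \<Rightarrow> real) \<Rightarrow> real set \<Rightarrow> bool" where
  "absolutely_monotone_on g A \<longleftrightarrow>
     (\<forall>j. \<forall>x\<in>A. (deriv ^^ j) g differentiable (at x) \<and> (deriv ^^ j) g x \<ge> 0)"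

definition in_class_S :: "(nat \<Rightarrow> real) \<Rightarrow> (real \<Rightarrow> real) \<Rightarrow> bool" where
  "in_class_S c f \<longleftrightarrow>
     (\<forall>x. ereal \<bar>x\<bar> < phi_radius c \<longrightarrow> f x = phi_series c x) \<and>
     (\<forall>x. ereal x < phi_radius c \<longrightarrow> f differentiable (at x)) \<and>
     absolutely_monotone_on (deriv f) {x. ereal x < phi_radius c}"

definition phi_fps :: "(nat \<Rightarrow> real) \<Rightarrow> real fps" where
  "phi_fps c = Abs_fps (\<lambda>m. if m = 0 then 0 else c m / fact m)"

definition sigma :: "(nat \<Rightarrow> real) \<Rightarrow> nat \<Rightarrow> real \<Rightarrow> real" where
  "sigma c k \<theta> = fact k * fps_nth (fps_exp \<theta> oo phi_fps c) k"

definition K_prob :: "(nat \<Rightarrow> real) \<Rightarrow> real \<Rightarrow> nat \<Rightarrow> nat \<Rightarrow> (nat \<Rightarrow> nat) \<Rightarrow> real" where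
  "K_prob c \<theta> n k ks =
     fact k / sigma c k (real n * \<theta>) * (\<Prod>m\<in>{1..n}. sigma c (ks m) \<theta> / fact (ks m))"

definition multinomial_coeff :: "nat \<Rightarrow> nat \<Rightarrow> (nat \<Rightarrow> nat) \<Rightarrow> real" where
  "multinomial_coeff n k ks = fact k / (\<Prod>m\<in>{1..n}. fact (ks m))"

end

theory Submission
  imports Defs "HOL-Complex_Analysis.Laurent_Convergence" "HOL-Real_Asymp.Real_Asymp"
begin

text \<open>Put \<open>b = \<theta> \<phi>\<^sub>1\<close>. The variable \<open>b X\<^sub>m\<close> has Laplace transform \<open>exp (\<theta> \<phi> (-x))\<close>
  and, by independence, \<open>b X\<^sub>1 + \<dots> + b X\<^sub>n\<close> has \<open>exp (n \<theta> \<phi> (-x))\<close>. As \<open>exp (\<theta> \<phi>)\<close>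
  is analytic at \<open>0\<close>, these Laplace transforms are moment generating functions near \<open>0\<close>,
  so the \<open>j\<close>-th moments are \<open>\<sigma>\<^sub>j(\<theta>)\<close> and \<open>\<sigma>\<^sub>j(n \<theta>)\<close>; they are extracted by taking
  finite differences of the Laplace transform and passing to the limit by monotone convergence.
  The first identity is then the definition of \<open>K\<close> once the powers of \<open>b\<close> cancel, and the
  second follows from the pointwise identity \<open>(\<Sum>\<^sub>i X\<^sub>i)\<^sup>k \<Prod>\<^sub>m S\<^sub>m\<^sup>k\<^sup>\<^sub>m = \<Prod>\<^sub>m X\<^sub>m\<^sup>k\<^sup>\<^sub>m\<close>.\<close>

section \<open>Power series\<close>

lemma alternating_binomial_sum_power:
  fixes m j :: nat
  assumes "m \<le> j"
  shows "(\<Sum>i\<le>j. of_nat (j choose i) * (-1) ^ i * of_nat i ^ m :: 'a :: {comm_ring_1, semiring_char_0})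
           = (if m = j then (-1) ^ j * fact j else 0)"
  using assms
proof (induction j arbitrary: m)
  case 0
  then show ?case by simp
next
  case (Suc j)
  show ?case
  proof (cases m)
    case 0
    then show ?thesis
      using choose_alternating_sum[of "Suc j", where ?'a = 'a] by (simp add: mult.commute)
  next
    case (Suc m')
    have "m' \<le> j" using Suc.prems Suc by simp
    have absorb: "of_nat (Suc j choose Suc i) * of_nat (Suc i) ^ Suc m'
        = of_nat (Suc j) * of_nat (j choose i) * (of_nat (Suc i) ^ m' :: 'a)" for i
    proof -
      have "of_nat (Suc j choose Suc i) * of_nat (Suc i) = (of_nat (Suc j) * of_nat (j choose i) :: 'a)"
        using times_binomial_minus1_eq[of "Suc i" "Suc j"] by (metis diff_Suc_1 mult.commute of_nat_mult zero_less_Suc)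
      then show ?thesis by (metis mult.assoc power_Suc2 mult.commute)
    qed
    have binom: "of_nat (Suc i) ^ m' = (\<Sum>l\<le>m'. of_nat (m' choose l) * of_nat i ^ l :: 'a)" for i
      using binomial_ring[of "of_nat i :: 'a" 1 m'] by (simp add: add.commute)
    have "(\<Sum>i\<le>Suc j. of_nat (Suc j choose i) * (-1) ^ i * of_nat i ^ m :: 'a)
        = (\<Sum>i\<le>j. (-1) ^ Suc i * (of_nat (Suc j choose Suc i) * of_nat (Suc i) ^ Suc m'))"
      using Suc by (simp only: sum.atMost_Suc_shift) (simp add: mult_ac)
    also have "\<dots> = - of_nat (Suc j) * (\<Sum>i\<le>j. of_nat (j choose i) * (-1) ^ i * of_nat (Suc i) ^ m')"
      by (simp only: absorb) (simp add: sum_distrib_left mult_ac del: binomial_Suc_Suc of_nat_Suc)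
    also have "\<dots> = - of_nat (Suc j) *
        (\<Sum>l\<le>m'. of_nat (m' choose l) * (\<Sum>i\<le>j. of_nat (j choose i) * (-1) ^ i * of_nat i ^ l))"
      by (simp only: binom sum_distrib_left)
         (simp add: mult_ac sum.swap[of _ "{..j}"] del: of_nat_Suc)
    also have "\<dots> = - of_nat (Suc j) * (if m' = j then (-1) ^ j * fact j else 0)"
      using \<open>m' \<le> j\<close> by (simp add: Suc.IH if_distrib[of "\<lambda>x. _ * x"] cong: if_cong)
    also have "\<dots> = (if m = Suc j then (-1) ^ Suc j * fact (Suc j) else 0)"
      using Suc by (simp add: algebra_simps)
    finally show ?thesis .
  qed
qed

lemma eval_fps_eq_sum_plus_shift:
  fixes H :: "'a :: {banach, real_normed_field} fps"
  assumes "norm z < fps_conv_radius H"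
  shows "eval_fps H z = (\<Sum>m<j. fps_nth H m * z ^ m) + z ^ j * eval_fps (fps_shift j H) z"
proof -
  have "(\<lambda>n. fps_nth (fps_shift j H) n * z ^ n) sums eval_fps (fps_shift j H) z"
    using assms by (intro sums_eval_fps) simp
  then have "(\<lambda>n. fps_nth H (n + j) * z ^ (n + j)) sums (z ^ j * eval_fps (fps_shift j H) z)"
    by (fastforce dest: sums_mult[of _ _ "z ^ j"] simp: power_add mult_ac)
  then have "(\<lambda>n. fps_nth H n * z ^ n) sums (z ^ j * eval_fps (fps_shift j H) z + (\<Sum>m<j. fps_nth H m * z ^ m))"
    by (subst (asm) sums_iff_shift)
  then show ?thesis
    using sums_eval_fps[OF assms] by (metis sums_unique2 add.commute)
qed

text \<open>The \<open>j\<close>-th finite difference of \<open>eval_fps H\<close> with step \<open>h\<close> kills all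
  coefficients below \<open>j\<close>, so after division by \<open>h ^ j\<close> only the shifted series remains.\<close>

lemma finite_difference_tendsto_fps_nth:
  fixes H :: "'a :: {banach, real_normed_field} fps"
  assumes "fps_conv_radius H > 0"
  shows "((\<lambda>h. (\<Sum>i\<le>j. of_nat (j choose i) * (-1) ^ i * eval_fps H (of_nat i * h)) / h ^ j)
           \<longlongrightarrow> (-1) ^ j * fact j * fps_nth H j) (at 0)"
proof -
  define Q where "Q = fps_shift j H"
  obtain e :: real where e: "0 < ereal e" "ereal e < fps_conv_radius H"
    using ereal_dense2[OF assms] by auto
  have near: "eventually (\<lambda>h. norm h < e / (j + 1) \<and> h \<noteq> 0) (at (0 :: 'a))"
    using e by (auto simp: eventually_at intro!: exI[of _ "e / (j + 1)"])
  have eq: "(\<Sum>i\<le>j. of_nat (j choose i) * (-1) ^ i * eval_fps H (of_nat i * h)) / h ^ j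
      = (\<Sum>i\<le>j. of_nat (j choose i) * (-1) ^ i * of_nat i ^ j * eval_fps Q (of_nat i * h))"
    if h: "norm h < e / (j + 1)" "h \<noteq> 0" for h
  proof -
    have small: "norm (of_nat i * h) < fps_conv_radius H" if "i \<le> j" for i
    proof -
      have "norm (of_nat i * h) \<le> (j + 1) * norm h"
        using that by (simp add: norm_mult mult_right_mono)
      also have "\<dots> < e" using h by (simp add: field_simps)
      finally show ?thesis using e(2) by (metis less_ereal.simps(1) order.strict_trans)
    qed
    have "(\<Sum>i\<le>j. of_nat (j choose i) * (-1) ^ i * eval_fps H (of_nat i * h))
        = (\<Sum>m<j. fps_nth H m * h ^ m * (\<Sum>i\<le>j. of_nat (j choose i) * (-1) ^ i * of_nat i ^ m))
          + h ^ j * (\<Sum>i\<le>j. of_nat (j choose i) * (-1) ^ i * of_nat i ^ j * eval_fps Q (of_nat i * h))"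
      using small
      by (simp add: eval_fps_eq_sum_plus_shift[of _ H j] Q_def algebra_simps sum.distrib
            sum_distrib_left sum_distrib_right sum.swap[of _ "{..j}"])
    also have "(\<Sum>m<j. fps_nth H m * h ^ m * (\<Sum>i\<le>j. of_nat (j choose i) * (-1) ^ i * of_nat i ^ m)) = 0"
      by (intro sum.neutral) (simp add: alternating_binomial_sum_power)
    finally show ?thesis using h by simp
  qed
  have "((\<lambda>h. \<Sum>i\<le>j. of_nat (j choose i) * (-1) ^ i * of_nat i ^ j * eval_fps Q (of_nat i * h))
      \<longlongrightarrow> (\<Sum>i\<le>j. of_nat (j choose i) * (-1) ^ i * of_nat i ^ j * eval_fps Q (of_nat i * 0))) (at 0)"
    using assms unfolding Q_def
    by (intro tendsto_intros isCont_tendsto_compose[OF continuous_eval_fps]) (auto simp: zero_ereal_def)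
  also have "(\<Sum>i\<le>j. of_nat (j choose i) * (-1) ^ i * of_nat i ^ j * eval_fps Q (of_nat i * 0))
      = (-1) ^ j * fact j * fps_nth H j"
    using alternating_binomial_sum_power[of j j, where 'a = 'a]
    by (simp add: eval_fps_at_0 Q_def sum_distrib_right[symmetric])
  finally show ?thesis
    by (rule Lim_transform_eventually) (rule eventually_mono[OF near], simp add: eq)
qed

definition fps_of_real :: "real fps \<Rightarrow> 'a :: real_algebra_1 fps" where
  "fps_of_real F = Abs_fps (\<lambda>n. of_real (fps_nth F n))"

lemma fps_of_real_nth [simp]: "fps_nth (fps_of_real F) n = of_real (fps_nth F n)"
  by (simp add: fps_of_real_def)

lemma fps_of_real_mult: "fps_of_real (F * G) = fps_of_real F * fps_of_real G"
  by (simp add: fps_eq_iff fps_mult_nth)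

lemma fps_of_real_power: "fps_of_real (F ^ i) = fps_of_real F ^ i"
  by (induction i) (simp add: fps_eq_iff, simp add: fps_of_real_mult)

lemma fps_of_real_compose: "fps_of_real (F oo G) = fps_of_real F oo fps_of_real G"
  by (simp add: fps_eq_iff fps_compose_nth fps_of_real_power[symmetric])

lemma fps_of_real_exp: "fps_of_real (fps_exp a) = (fps_exp (of_real a) :: 'a :: real_field fps)"
  by (simp add: fps_eq_iff)

lemma fps_conv_radius_of_real:
  "fps_conv_radius (fps_of_real F :: 'a :: {banach, real_normed_div_algebra} fps) = fps_conv_radius F"
  unfolding fps_conv_radius_def by (subst (1 2) conv_radius_norm[symmetric]) simp

lemma eval_fps_of_real:
  assumes "norm x < fps_conv_radius F"
  shows "eval_fps (fps_of_real F :: 'a :: {banach, real_normed_div_algebra} fps) (of_real x)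
           = of_real (eval_fps F x)"
proof -
  have "(\<lambda>n. fps_nth F n * x ^ n) sums eval_fps F x"
    using assms by (rule sums_eval_fps)
  then have "(\<lambda>n. of_real (fps_nth F n * x ^ n)) sums (of_real (eval_fps F x) :: 'a)"
    by (rule sums_of_real)
  then show ?thesis
    by (simp add: eval_fps_def sums_iff)
qed

lemma fps_conv_radius_phi_fps: "fps_conv_radius (phi_fps c) = phi_radius c"
  by (simp add: fps_conv_radius_def phi_radius_def phi_fps_def)

lemma eval_fps_phi_fps:
  assumes "ereal \<bar>x\<bar> < phi_radius c"
  shows "eval_fps (phi_fps c) x = phi_series c x"
proof -
  have "(\<lambda>n. fps_nth (phi_fps c) n * x ^ n) sums eval_fps (phi_fps c) x"
    using assms by (intro sums_eval_fps) (simp add: fps_conv_radius_phi_fps)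
  then have "(\<lambda>n. fps_nth (phi_fps c) (Suc n) * x ^ Suc n) sums eval_fps (phi_fps c) x"
    by (subst sums_Suc_iff) (simp add: phi_fps_def)
  then show ?thesis
    by (simp add: phi_series_def phi_fps_def sums_iff)
qed

section \<open>Moments from the Laplace transform\<close>

lemma dyadic_exp_difference_incseq:
  fixes y :: real
  assumes "y \<ge> 0"
  shows "incseq (\<lambda>N::nat. 2 ^ N * (1 - exp (- y / 2 ^ N)))"
proof (rule incseq_SucI)
  fix N :: nat
  define e where "e = exp (- y / 2 ^ Suc N)"
  have "e \<le> 1" using assms by (simp add: e_def)
  have "exp (- y / 2 ^ N) = e ^ 2"
    by (simp add: e_def exp_of_nat_mult[symmetric])
  then have "2 ^ N * (1 - exp (- y / 2 ^ N)) = 2 ^ N * ((1 - e) * (1 + e))"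
    by (simp add: algebra_simps power2_eq_square)
  also have "\<dots> \<le> 2 ^ N * ((1 - e) * 2)"
    using \<open>e \<le> 1\<close> by (intro mult_left_mono) (auto simp: e_def)
  also have "\<dots> = 2 ^ Suc N * (1 - exp (- y / 2 ^ Suc N))"
    by (simp add: e_def)
  finally show "2 ^ N * (1 - exp (- y / 2 ^ N)) \<le> 2 ^ Suc N * (1 - exp (- y / 2 ^ Suc N))" .
qed

lemma dyadic_exp_difference_tendsto: "(\<lambda>N::nat. 2 ^ N * (1 - exp (- y / 2 ^ N))) \<longlonglongrightarrow> (y :: real)"
  by real_asymp

lemma one_minus_exp_power_expand:
  fixes t :: real
  shows "(1 - exp (- t)) ^ j = (\<Sum>i\<le>j. of_nat (j choose i) * (-1) ^ i * exp (- (real i * t)))"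
  using binomial_ring[of "- exp (- t)" 1 j]
  by (simp add: add.commute power_minus[of "exp _"] exp_of_nat_mult[symmetric] mult_ac)

context prob_space
begin

lemma integrable_exp_neg_mult:
  fixes Y :: "'a \<Rightarrow> real"
  assumes "Y \<in> borel_measurable M" "\<And>\<omega>. \<omega> \<in> space M \<Longrightarrow> Y \<omega> \<ge> 0" "x \<ge> 0"
  shows "integrable M (\<lambda>\<omega>. exp (- x * Y \<omega>))"
proof (rule integrable_const_bound[where B = 1])
  show "AE \<omega> in M. norm (exp (- x * Y \<omega>)) \<le> 1"
    using assms by (intro AE_I2) (auto intro: mult_nonneg_nonneg)
qed (use assms(1) in measurable)

lemma integral_dyadic_exp_difference_power:
  fixes Y :: "'a \<Rightarrow> real" and N j :: nat
  assumes Ym: "Y \<in> borel_measurable M" and Yn: "\<And>\<omega>. \<omega> \<in> space M \<Longrightarrow> Y \<omega> \<ge> 0"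
  defines "F \<equiv> \<lambda>\<omega>. (2 ^ N * (1 - exp (- Y \<omega> / 2 ^ N))) ^ j"
  shows "integrable M F"
    and "(\<integral>\<omega>. F \<omega> \<partial>M) = (2 ^ N) ^ j *
           (\<Sum>i\<le>j. of_nat (j choose i) * (-1) ^ i * (\<integral>\<omega>. exp (- (real i / 2 ^ N) * Y \<omega>) \<partial>M))"
proof -
  have F_eq: "F = (\<lambda>\<omega>. (2 ^ N) ^ j *
      (\<Sum>i\<le>j. of_nat (j choose i) * (-1) ^ i * exp (- (real i / 2 ^ N) * Y \<omega>)))"
    by (simp add: F_def power_mult_distrib one_minus_exp_power_expand[of "_ / 2 ^ N"])
  have int: "integrable M (\<lambda>\<omega>. of_nat (j choose i) * (-1) ^ i * exp (- (real i / 2 ^ N) * Y \<omega>))" for i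
    by (intro integrable_mult_right integrable_exp_neg_mult[OF Ym Yn]) auto
  show "integrable M F"
    unfolding F_eq by (intro integrable_mult_right Bochner_Integration.integrable_sum int)
  show "(\<integral>\<omega>. F \<omega> \<partial>M) = (2 ^ N) ^ j *
      (\<Sum>i\<le>j. of_nat (j choose i) * (-1) ^ i * (\<integral>\<omega>. exp (- (real i / 2 ^ N) * Y \<omega>) \<partial>M))"
    unfolding F_eq integral_mult_right_zero
    by (subst Bochner_Integration.integral_sum) (simp_all only: int integral_mult_right_zero)
qed

text \<open>The rescaled differences \<open>(2 ^ N * (1 - exp (- Y / 2 ^ N))) ^ j\<close> increase to \<open>Y ^ j\<close>,
  while their expectations are \<open>j\<close>-th finite differences of the Laplace transform with step
  \<open>-1 / 2 ^ N\<close>, which converge to \<open>j! [x\<^sup>j] H\<close>.\<close>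

lemma moment_eq_fps_nth_of_laplace:
  fixes Y :: "'a \<Rightarrow> real" and H :: "complex fps"
  assumes Ym: "Y \<in> borel_measurable M" and Yn: "\<And>\<omega>. \<omega> \<in> space M \<Longrightarrow> Y \<omega> \<ge> 0"
    and H: "fps_conv_radius H > 0" and \<delta>: "\<delta> > 0"
    and laplace: "\<And>x. 0 \<le> x \<Longrightarrow> x < \<delta> \<Longrightarrow>
       complex_of_real (\<integral>\<omega>. exp (- x * Y \<omega>) \<partial>M) = eval_fps H (- of_real x)"
  shows "integrable M (\<lambda>\<omega>. Y \<omega> ^ j) \<and> complex_of_real (\<integral>\<omega>. Y \<omega> ^ j \<partial>M) = fact j * fps_nth H j"
proof -
  define F where "F N \<omega> = (2 ^ N * (1 - exp (- Y \<omega> / 2 ^ N))) ^ j" for N :: nat and \<omega>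
  define D where "D h = (\<Sum>i\<le>j. of_nat (j choose i) * (-1) ^ i * eval_fps H (of_nat i * h)) / h ^ j"
    for h :: complex
  define h where "h N = - complex_of_real (1 / 2 ^ N)" for N :: nat
  have "h \<longlonglongrightarrow> - complex_of_real 0"
    unfolding h_def by (intro tendsto_intros LIMSEQ_divide_realpow_zero) auto
  then have "filterlim h (at 0) sequentially"
    by (intro filterlim_atI) (auto simp: h_def)
  then have "(\<lambda>N. (-1) ^ j * D (h N)) \<longlonglongrightarrow> (-1) ^ j * ((-1) ^ j * fact j * fps_nth H j)"
    unfolding D_def by (intro tendsto_mult_left filterlim_compose[OF finite_difference_tendsto_fps_nth[OF H]])
  also have "(-1) ^ j * ((-1) ^ j * fact j * fps_nth H j) = fact j * fps_nth H j"
    by (simp add: mult.assoc[symmetric] power_mult_distrib[symmetric])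
  finally have lim_D: "(\<lambda>N. (-1) ^ j * D (h N)) \<longlonglongrightarrow> fact j * fps_nth H j" .
  have "eventually (\<lambda>N. real j / 2 ^ N < \<delta>) sequentially"
    using \<delta> by (intro order_tendstoD(2)[OF LIMSEQ_divide_realpow_zero]) auto
  then have "eventually (\<lambda>N. complex_of_real (\<integral>\<omega>. F N \<omega> \<partial>M) = (-1) ^ j * D (h N)) sequentially"
  proof eventually_elim
    case (elim N)
    have "complex_of_real (\<integral>\<omega>. F N \<omega> \<partial>M) =
        (2 ^ N) ^ j * (\<Sum>i\<le>j. of_nat (j choose i) * (-1) ^ i * eval_fps H (of_nat i * h N))"
    proof -
      have "complex_of_real (\<integral>\<omega>. exp (- (real i / 2 ^ N) * Y \<omega>) \<partial>M) = eval_fps H (of_nat i * h N)"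
        if "i \<le> j" for i
      proof -
        have "real i / 2 ^ N \<le> real j / 2 ^ N" using that by (simp add: divide_right_mono)
        then show ?thesis using elim by (subst laplace) (auto simp: h_def)
      qed
      moreover have "(\<integral>\<omega>. F N \<omega> \<partial>M) = (2 ^ N) ^ j *
          (\<Sum>i\<le>j. of_nat (j choose i) * (-1) ^ i * (\<integral>\<omega>. exp (- (real i / 2 ^ N) * Y \<omega>) \<partial>M))"
        unfolding F_def by (rule integral_dyadic_exp_difference_power(2)[OF Ym Yn])
      ultimately show ?thesis by simp
    qed
    also have "\<dots> = (-1) ^ j * D (h N)"
      by (simp add: D_def h_def field_simps power_minus')
    finally show ?case .
  qed
  then have lim: "(\<lambda>N. complex_of_real (\<integral>\<omega>. F N \<omega> \<partial>M)) \<longlonglongrightarrow> fact j * fps_nth H j"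
    by (subst tendsto_cong) (use lim_D in auto)
  then have lim_Re: "(\<lambda>N. \<integral>\<omega>. F N \<omega> \<partial>M) \<longlonglongrightarrow> Re (fact j * fps_nth H j)"
    using tendsto_Re by fastforce
  have real: "complex_of_real (Re (fact j * fps_nth H j)) = fact j * fps_nth H j"
    using LIMSEQ_unique[OF tendsto_of_real[OF lim_Re] lim] by simp
  have mono: "AE \<omega> in M. incseq (\<lambda>N. F N \<omega>)"
  proof (rule AE_I2)
    fix \<omega> assume "\<omega> \<in> space M"
    then have "Y \<omega> \<ge> 0" by (rule Yn)
    then have "incseq (\<lambda>N. 2 ^ N * (1 - exp (- Y \<omega> / 2 ^ N)))"
      "\<And>N. 0 \<le> 2 ^ N * (1 - exp (- Y \<omega> / 2 ^ N :: real))"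
      by (rule dyadic_exp_difference_incseq) (use \<open>Y \<omega> \<ge> 0\<close> in simp)
    then show "incseq (\<lambda>N. F N \<omega>)"
      unfolding F_def incseq_def by (auto intro: power_mono)
  qed
  have pointwise: "AE \<omega> in M. (\<lambda>N. F N \<omega>) \<longlonglongrightarrow> Y \<omega> ^ j"
    unfolding F_def by (intro AE_I2 tendsto_intros dyadic_exp_difference_tendsto)
  have int: "integrable M (F N)" for N
    unfolding F_def by (rule integral_dyadic_exp_difference_power[OF Ym Yn])
  have meas: "(\<lambda>\<omega>. Y \<omega> ^ j) \<in> borel_measurable M"
    using Ym by measurable
  show ?thesis
    using integrable_monotone_convergence[OF int mono pointwise lim_Re meas]
      integral_monotone_convergence[OF int mono pointwise lim_Re meas] real by simp
qed

text \<open>Composition of power series expansions is only available over \<open>\<complex>\<close>, hence the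
  detour through \<open>fps_of_real\<close> to see that \<open>exp (a * \<phi>)\<close> is analytic at \<open>0\<close>.\<close>

lemma moment_eq_sigma:
  fixes Y :: "'a \<Rightarrow> real"
  assumes Ym: "Y \<in> borel_measurable M" and Yn: "\<And>\<omega>. \<omega> \<in> space M \<Longrightarrow> Y \<omega> \<ge> 0"
    and R: "phi_radius c > 0"
    and f: "\<And>x. ereal \<bar>x\<bar> < phi_radius c \<Longrightarrow> f x = phi_series c x"
    and laplace: "\<And>x. x \<ge> 0 \<Longrightarrow> (\<integral>\<omega>. exp (- x * Y \<omega>) \<partial>M) = exp (a * f (- x))"
  shows "integrable M (\<lambda>\<omega>. Y \<omega> ^ j) \<and> (\<integral>\<omega>. Y \<omega> ^ j \<partial>M) = sigma c j a"
proof -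
  define G :: "complex fps" where "G = fps_of_real (phi_fps c)"
  define H :: "complex fps" where "H = fps_of_real (fps_exp a oo phi_fps c)"
  have "fps_conv_radius G > 0"
    using R by (simp add: G_def fps_conv_radius_of_real fps_conv_radius_phi_fps)
  then have "eval_fps G has_fps_expansion G"
    by (rule eval_fps_has_fps_expansion)
  then have "((\<lambda>z. exp (of_real a * z)) \<circ> eval_fps G) has_fps_expansion (fps_exp (of_real a) oo G)"
    by (rule has_fps_expansion_compose[OF has_fps_expansion_exp]) (simp add: G_def phi_fps_def)
  then have "((\<lambda>z. exp (of_real a * z)) \<circ> eval_fps G) has_fps_expansion H"
    by (simp add: H_def G_def fps_of_real_compose fps_of_real_exp)
  then have H: "fps_conv_radius H > 0"
    and "eventually (\<lambda>z. eval_fps H z = exp (of_real a * eval_fps G z)) (nhds 0)"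
    by (auto simp: has_fps_expansion_def)
  then obtain \<delta> where \<delta>: "\<delta> > 0" "\<And>z. norm z < \<delta> \<Longrightarrow> eval_fps H z = exp (of_real a * eval_fps G z)"
    by (auto simp: eventually_nhds_metric dist_norm)
  obtain e :: real where e: "0 < e" "ereal e < phi_radius c"
    using ereal_dense2[OF R] by (metis ereal_less(2))
  have "complex_of_real (\<integral>\<omega>. exp (- x * Y \<omega>) \<partial>M) = eval_fps H (- of_real x)"
    if x: "0 \<le> x" "x < min \<delta> e" for x
  proof -
    have x_in: "ereal \<bar>- x\<bar> < phi_radius c"
      using x e(2) by (simp add: order.strict_trans[of _ "ereal e"])
    have "complex_of_real (\<integral>\<omega>. exp (- x * Y \<omega>) \<partial>M) = of_real (exp (a * eval_fps (phi_fps c) (- x)))"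
      using laplace[OF x(1)] f[OF x_in] eval_fps_phi_fps[OF x_in] by simp
    also have "\<dots> = exp (of_real a * eval_fps G (of_real (- x)))"
    proof -
      have "eval_fps G (of_real (- x)) = of_real (eval_fps (phi_fps c) (- x))"
        unfolding G_def using x_in by (intro eval_fps_of_real) (simp add: fps_conv_radius_phi_fps)
      then show ?thesis by (simp flip: exp_of_real)
    qed
    also have "\<dots> = eval_fps H (- of_real x)"
      using \<delta>(2)[of "- of_real x"] x by simp
    finally show ?thesis .
  qed
  then have "integrable M (\<lambda>\<omega>. Y \<omega> ^ j) \<and> complex_of_real (\<integral>\<omega>. Y \<omega> ^ j \<partial>M) = fact j * fps_nth H j"
    using \<delta>(1) e(1) by (intro moment_eq_fps_nth_of_laplace[OF Ym Yn H, of "min \<delta> e"]) auto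
  moreover have "fact j * fps_nth H j = complex_of_real (sigma c j a)"
    by (simp add: H_def sigma_def)
  ultimately show ?thesis
    by (metis of_real_eq_iff)
qed

lemma moment_eq_sigma_scaled:
  fixes Y :: "'a \<Rightarrow> real"
  assumes Ym: "Y \<in> borel_measurable M" and Yn: "\<And>\<omega>. \<omega> \<in> space M \<Longrightarrow> Y \<omega> \<ge> 0"
    and R: "phi_radius c > 0"
    and f: "\<And>x. ereal \<bar>x\<bar> < phi_radius c \<Longrightarrow> f x = phi_series c x"
    and b: "b > 0"
    and laplace: "\<And>x. x \<ge> 0 \<Longrightarrow> (\<integral>\<omega>. exp (- x * Y \<omega>) \<partial>M) = exp (a * f (- x / b))"
  shows "integrable M (\<lambda>\<omega>. Y \<omega> ^ j) \<and> (\<integral>\<omega>. Y \<omega> ^ j \<partial>M) = sigma c j a / b ^ j"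
proof -
  have "integrable M (\<lambda>\<omega>. (b * Y \<omega>) ^ j) \<and> (\<integral>\<omega>. (b * Y \<omega>) ^ j \<partial>M) = sigma c j a"
  proof (rule moment_eq_sigma[OF _ _ R f])
    show "(\<lambda>\<omega>. b * Y \<omega>) \<in> borel_measurable M"
      using Ym by measurable
    show "0 \<le> b * Y \<omega>" if "\<omega> \<in> space M" for \<omega>
      using b Yn[OF that] by simp
    show "(\<integral>\<omega>. exp (- x * (b * Y \<omega>)) \<partial>M) = exp (a * f (- x))" if "x \<ge> 0" for x
      using laplace[of "x * b"] that b by (simp add: mult_ac)
  qed
  then show ?thesis
    using b by (simp add: power_mult_distrib eq_divide_eq mult.commute[of _ "b ^ j"])
qed

lemma integral_comp_eq_of_distr_eq:
  fixes X Y :: "'a \<Rightarrow> 'b :: topological_space" and g :: "'b \<Rightarrow> real"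
  assumes "distr M borel X = distr M borel Y"
    and "X \<in> borel_measurable M" "Y \<in> borel_measurable M" "g \<in> borel_measurable borel"
  shows "(\<integral>\<omega>. g (X \<omega>) \<partial>M) = (\<integral>\<omega>. g (Y \<omega>) \<partial>M)"
  using integral_distr[OF assms(2,4)] integral_distr[OF assms(3,4)] assms(1) by simp

lemma laplace_sum_indep_identical:
  fixes X :: "'i \<Rightarrow> 'a \<Rightarrow> real"
  assumes indep: "indep_vars (\<lambda>_. borel) X I" and "finite I"
    and Xm: "\<And>i. i \<in> I \<Longrightarrow> X i \<in> borel_measurable M"
    and Xn: "\<And>i \<omega>. i \<in> I \<Longrightarrow> \<omega> \<in> space M \<Longrightarrow> X i \<omega> \<ge> 0" and "x \<ge> 0"
    and laplace: "\<And>i. i \<in> I \<Longrightarrow> (\<integral>\<omega>. exp (- x * X i \<omega>) \<partial>M) = exp t"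
  shows "(\<integral>\<omega>. exp (- x * (\<Sum>i\<in>I. X i \<omega>)) \<partial>M) = exp (real (card I) * t)"
proof -
  have "(\<integral>\<omega>. exp (- x * (\<Sum>i\<in>I. X i \<omega>)) \<partial>M) = (\<integral>\<omega>. (\<Prod>i\<in>I. exp (- x * X i \<omega>)) \<partial>M)"
    using \<open>finite I\<close> by (simp add: sum_distrib_left exp_sum sum_negf[symmetric])
  also have "\<dots> = (\<Prod>i\<in>I. \<integral>\<omega>. exp (- x * X i \<omega>) \<partial>M)"
  proof (rule indep_vars_lebesgue_integral[OF \<open>finite I\<close>])
    show "indep_vars (\<lambda>_. borel) (\<lambda>i \<omega>. exp (- x * X i \<omega>)) I"
      by (rule indep_vars_compose2[OF indep, where Y = "\<lambda>_ y. exp (- x * y)"]) measurable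
    show "integrable M (\<lambda>\<omega>. exp (- x * X i \<omega>))" if "i \<in> I" for i
      using Xm[OF that] Xn[OF that] \<open>x \<ge> 0\<close> by (rule integrable_exp_neg_mult)
  qed
  also have "\<dots> = exp (real (card I) * t)"
    using laplace by (simp add: exp_of_nat_mult)
  finally show ?thesis .
qed


lemma moment_sum_indep_eq_sigma:
  fixes X :: "'i \<Rightarrow> 'a \<Rightarrow> real"
  assumes indep: "indep_vars (\<lambda>_. borel) X I" and "finite I"
    and Xm: "\<And>i. i \<in> I \<Longrightarrow> X i \<in> borel_measurable M"
    and Xn: "\<And>i \<omega>. i \<in> I \<Longrightarrow> \<omega> \<in> space M \<Longrightarrow> X i \<omega> \<ge> 0"
    and R: "phi_radius c > 0"
    and f: "\<And>x. ereal \<bar>x\<bar> < phi_radius c \<Longrightarrow> f x = phi_series c x"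
    and b: "b > 0"
    and laplace: "\<And>i x. i \<in> I \<Longrightarrow> x \<ge> 0 \<Longrightarrow> (\<integral>\<omega>. exp (- x * X i \<omega>) \<partial>M) = exp (a * f (- x / b))"
  shows "(\<integral>\<omega>. (\<Sum>i\<in>I. X i \<omega>) ^ j \<partial>M) = sigma c j (real (card I) * a) / b ^ j"
proof (rule moment_eq_sigma_scaled[OF _ _ R f b, THEN conjunct2])
  show "(\<lambda>\<omega>. \<Sum>i\<in>I. X i \<omega>) \<in> borel_measurable M"
    using Xm by measurable
  show "0 \<le> (\<Sum>i\<in>I. X i \<omega>)" if "\<omega> \<in> space M" for \<omega>
    using Xn that by (intro sum_nonneg) auto
  show "(\<integral>\<omega>. exp (- x * (\<Sum>i\<in>I. X i \<omega>)) \<partial>M) = exp (real (card I) * a * f (- x / b))"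
    if "x \<ge> 0" for x
    using laplace_sum_indep_identical[OF indep \<open>finite I\<close> Xm Xn that laplace[OF _ that]]
    by (simp add: mult.assoc)
qed


lemma integral_prod_power_indep:
  fixes X :: "'i \<Rightarrow> 'a \<Rightarrow> real"
  assumes indep: "indep_vars (\<lambda>_. borel) X I" and "finite I"
    and "\<And>i. i \<in> I \<Longrightarrow> integrable M (\<lambda>\<omega>. X i \<omega> ^ k i)"
  shows "(\<integral>\<omega>. (\<Prod>i\<in>I. X i \<omega> ^ k i) \<partial>M) = (\<Prod>i\<in>I. \<integral>\<omega>. X i \<omega> ^ k i \<partial>M)"
proof (rule indep_vars_lebesgue_integral[OF \<open>finite I\<close>])
  show "indep_vars (\<lambda>_. borel) (\<lambda>i \<omega>. X i \<omega> ^ k i) I"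
    by (rule indep_vars_compose2[OF indep, where Y = "\<lambda>i y. y ^ k i"]) measurable
qed (use assms(3) in auto)

end

section \<open>The occupancy law\<close>

lemma K_prob_eq_scaled:
  assumes "b \<noteq> 0" and "(\<Sum>m\<in>{1..n}. ks m) = k"
  shows "K_prob c \<theta> n k ks = multinomial_coeff n k ks *
           (\<Prod>m\<in>{1..n}. sigma c (ks m) \<theta> / b ^ ks m) / (sigma c k (real n * \<theta>) / b ^ k)"
proof -
  have "(\<Prod>m\<in>{1..n}. b ^ ks m) = b ^ k"
    using assms(2) by (metis power_sum)
  moreover have "(\<Prod>m\<in>{1..n}. fact (ks m) :: real) \<noteq> 0"
    by (simp add: prod_pos less_imp_neq[symmetric])
  ultimately show ?thesis
    using assms(1) unfolding K_prob_def multinomial_coeff_def prod_dividef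
    by (cases "sigma c k (real n * \<theta>) = 0") (simp_all add: field_simps)
qed

lemma power_sum_mult_prod_divide:
  fixes x :: "'i \<Rightarrow> real" and k :: "'i \<Rightarrow> nat"
  assumes "finite I" and "\<And>i. i \<in> I \<Longrightarrow> x i \<ge> 0"
  shows "(\<Sum>i\<in>I. x i) ^ (\<Sum>i\<in>I. k i) * (\<Prod>i\<in>I. (x i / (\<Sum>i\<in>I. x i)) ^ k i)
           = (\<Prod>i\<in>I. x i ^ k i)"
proof (cases "(\<Sum>i\<in>I. x i) = 0")
  case True
  then have x0: "\<And>i. i \<in> I \<Longrightarrow> x i = 0"
    using assms sum_nonneg_eq_0_iff by blast
  show ?thesis
  proof (cases "\<forall>i\<in>I. k i = 0")
    case False
    then obtain i where i: "i \<in> I" "k i \<noteq> 0" by blast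
    then have "(\<Prod>i\<in>I. x i ^ k i) = 0"
      using x0 assms(1) by (intro prod_zero) auto
    moreover have "(\<Sum>i\<in>I. k i) \<noteq> 0"
      using i assms(1) by auto
    ultimately show ?thesis
      using True by simp
  qed simp
next
  case False
  have "(\<Prod>i\<in>I. (x i / (\<Sum>i\<in>I. x i)) ^ k i) = (\<Prod>i\<in>I. x i ^ k i) / (\<Prod>i\<in>I. (\<Sum>i\<in>I. x i) ^ k i)"
    by (simp add: power_divide prod_dividef)
  also have "(\<Prod>i\<in>I. (\<Sum>i\<in>I. x i) ^ k i) = (\<Sum>i\<in>I. x i) ^ (\<Sum>i\<in>I. k i)"
    by (simp add: power_sum)
  finally show ?thesis
    using False by simp
qed

theorem proposition11:
  fixes c :: "nat \<Rightarrow> real" and f :: "real \<Rightarrow> real" and \<theta> :: real and n k :: nat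
    and M :: "'a measure" and X :: "nat \<Rightarrow> 'a \<Rightarrow> real" and ks :: "nat \<Rightarrow> nat"
  assumes c_nonneg: "\<And>m. m \<ge> 1 \<Longrightarrow> c m \<ge> 0"
    and c1_pos: "c 1 > 0"
    and radius_pos: "phi_radius c > 0"
    and classS: "in_class_S c f"
    and theta_pos: "\<theta> > 0"
    and n_pos: "n \<ge> 1" and k_pos: "k \<ge> 1"
    and prob: "prob_space M"
    and rv: "\<And>m. m \<in> {1..n} \<Longrightarrow> X m \<in> borel_measurable M"
    and indep: "prob_space.indep_vars M (\<lambda>_. borel) X {1..n}"
    and ident: "\<And>m. m \<in> {1..n} \<Longrightarrow> distr M borel (X m) = distr M borel (X 1)"
    and nonneg: "\<And>m \<omega>. m \<in> {1..n} \<Longrightarrow> \<omega> \<in> space M \<Longrightarrow> X m \<omega> \<ge> 0"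
    and mean1: "integrable M (X 1)" "prob_space.expectation M (X 1) = 1"
    and laplace: "\<And>x. x \<ge> 0 \<Longrightarrow>
        prob_space.expectation M (\<lambda>\<omega>. exp (- x * X 1 \<omega>)) = exp (\<theta> * f (- x / (\<theta> * c 1)))"
    and ks_sum: "(\<Sum>m\<in>{1..n}. ks m) = k"
  shows "K_prob c \<theta> n k ks =
           multinomial_coeff n k ks *
             (\<Prod>m\<in>{1..n}. prob_space.expectation M (\<lambda>\<omega>. X m \<omega> ^ ks m))
             / prob_space.expectation M (\<lambda>\<omega>. (\<Sum>m\<in>{1..n}. X m \<omega>) ^ k)
       \<and> K_prob c \<theta> n k ks =
           multinomial_coeff n k ks *
             prob_space.expectation M (\<lambda>\<omega>. (\<Sum>m\<in>{1..n}. X m \<omega>) ^ k *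
                 (\<Prod>m\<in>{1..n}. (X m \<omega> / (\<Sum>i\<in>{1..n}. X i \<omega>)) ^ ks m))
             / prob_space.expectation M (\<lambda>\<omega>. (\<Sum>m\<in>{1..n}. X m \<omega>) ^ k)"
proof -
  interpret prob_space M by (rule prob)
  define b where "b = \<theta> * c 1"
  have b: "b > 0" using theta_pos c1_pos by (simp add: b_def)
  have f: "\<And>x. ereal \<bar>x\<bar> < phi_radius c \<Longrightarrow> f x = phi_series c x"
    using classS by (simp add: in_class_S_def)
  have laplace_m: "(\<integral>\<omega>. exp (- x * X m \<omega>) \<partial>M) = exp (\<theta> * f (- x / b))"
    if "m \<in> {1..n}" "x \<ge> 0" for m x
    using laplace[OF that(2)] integral_comp_eq_of_distr_eq[OF ident rv rv, of m "\<lambda>y. exp (- x * y)"] that n_pos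
    by (simp add: b_def)
  have moment_m: "integrable M (\<lambda>\<omega>. X m \<omega> ^ j) \<and> (\<integral>\<omega>. X m \<omega> ^ j \<partial>M) = sigma c j \<theta> / b ^ j"
    if "m \<in> {1..n}" for m j
    using that by (intro moment_eq_sigma_scaled[OF rv nonneg radius_pos f b laplace_m])
  have moment_sum: "(\<integral>\<omega>. (\<Sum>m\<in>{1..n}. X m \<omega>) ^ k \<partial>M) = sigma c k (real n * \<theta>) / b ^ k"
    using moment_sum_indep_eq_sigma[OF indep _ rv nonneg radius_pos f b laplace_m] by simp
  have product: "(\<integral>\<omega>. (\<Prod>m\<in>{1..n}. X m \<omega> ^ ks m) \<partial>M) = (\<Prod>m\<in>{1..n}. \<integral>\<omega>. X m \<omega> ^ ks m \<partial>M)"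
    using moment_m by (intro integral_prod_power_indep[OF indep]) auto
  have "(\<Prod>m\<in>{1..n}. \<integral>\<omega>. X m \<omega> ^ ks m \<partial>M) = (\<Prod>m\<in>{1..n}. sigma c (ks m) \<theta> / b ^ ks m)"
    by (rule prod.cong[OF refl]) (use moment_m in blast)
  then have "K_prob c \<theta> n k ks = multinomial_coeff n k ks *
      (\<Prod>m\<in>{1..n}. \<integral>\<omega>. X m \<omega> ^ ks m \<partial>M) / (\<integral>\<omega>. (\<Sum>m\<in>{1..n}. X m \<omega>) ^ k \<partial>M)"
    unfolding moment_sum using b ks_sum by (simp add: K_prob_eq_scaled[where b = b])
  moreover have "(\<integral>\<omega>. (\<Sum>m\<in>{1..n}. X m \<omega>) ^ k *
      (\<Prod>m\<in>{1..n}. (X m \<omega> / (\<Sum>i\<in>{1..n}. X i \<omega>)) ^ ks m) \<partial>M)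
      = (\<Prod>m\<in>{1..n}. \<integral>\<omega>. X m \<omega> ^ ks m \<partial>M)"
    unfolding product[symmetric] ks_sum[symmetric]
    by (intro Bochner_Integration.integral_cong refl power_sum_mult_prod_divide) (auto intro: nonneg)
  ultimately show ?thesis
    by (simp only:)
qed

end
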